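(* Let $B_1\in\mathbf B$ and $B_2\in\mathrm{Mat}_{2,3}(\mathbb R)$ with $B_2\notin B_1\mathbb R$. Then $\mu\{x: p_{B_1,B_2}(x)\ne0\}>0$.
   Context: $\mathbf A=\{A_i\}_{i\in\mathcal I}\subset\mathrm{SL}(3,\mathbb R)_{>0}$ finite (determinant one, positive entries), generating a semigroup Zariski dense in $\mathrm{SL}(3,\mathbb R)$. For a $3\times3$ matrix $A$ with rows $r_{A,j}$, $\tilde x=(x_1,x_2,1)$ and $\varphi_A(x)=(\langle r_{A,1},\tilde x\rangle/\langle r_{A,3},\tilde x\rangle,\langle r_{A,2},\tilde x\rangle/\langle r_{A,3},\tilde x\rangle)$. $p$ positive probability vector, $\mu$ the compactly supported probability on $\mathbb R^2_{>0}$ with $\mu=\sum_ip_i\varphi_{A_i}\mu$. $\mathbf B$: matrices $B\in\mathrm{Mat}_{2,3}(\mathbb R)$ with rows $r_{B,1},r_{B,2}$ such that $|r_{B,2}|=1$, $r_{B,2}$ has nonnegative coordinates and $r_{B,1},r_{B,2}$ are linearly independent. For $B_1,B_2\in\mathrm{Mat}_{2,3}(\mathbb R)$, $p_{B_1,B_2}(x)=\det\begin{pmatrix}\langle r_{B_1,1},\tilde x\rangle&\langle r_{B_2,1},\tilde x\rangle\\\langle r_{B_1,2},\tilde x\rangle&\langle r_{B_2,2},\tilde x\rangle\end{pmatrix}$ for $x\in\mathbb R^2$. *)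

theory Defs
  imports "HOL-Analysis.Analysis" "HOL-Probability.Probability"
begin

definition tl3 :: "real^2 \<Rightarrow> real^3" where
  "tl3 x = vector [x$1, x$2, 1]"

definition phiA :: "real^3^3 \<Rightarrow> real^2 \<Rightarrow> real^2" where
  "phiA A x = vector [ (A$1 \<bullet> tl3 x) / (A$3 \<bullet> tl3 x), (A$2 \<bullet> tl3 x) / (A$3 \<bullet> tl3 x) ]"

definition pB :: "real^3^2 \<Rightarrow> real^3^2 \<Rightarrow> real^2 \<Rightarrow> real" where
  "pB B1 B2 x = (B1$1 \<bullet> tl3 x) * (B2$2 \<bullet> tl3 x) - (B2$1 \<bullet> tl3 x) * (B1$2 \<bullet> tl3 x)"

definition Bset :: "(real^3^2) set" where
  "Bset = {B. norm (B$2) = 1 \<and> (\<forall>k. B$2$k \<ge> 0) \<and> B$1 \<noteq> B$2 \<and> independent {B$1, B$2}}"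

definition SL3 :: "(real^3^3) set" where
  "SL3 = {M. det M = 1}"

definition SL3pos :: "(real^3^3) set" where
  "SL3pos = {M. det M = 1 \<and> (\<forall>i j. M$i$j > 0)}"

inductive_set semigroup_gen :: "(real^'n^'n) set \<Rightarrow> (real^'n^'n) set" for S where
  gen: "M \<in> S \<Longrightarrow> M \<in> semigroup_gen S"
| mult: "M \<in> semigroup_gen S \<Longrightarrow> N \<in> semigroup_gen S \<Longrightarrow> M ** N \<in> semigroup_gen S"

inductive matrix_poly :: "(real^'n^'m \<Rightarrow> real) \<Rightarrow> bool" where
  const: "matrix_poly (\<lambda>M. c)"
| entry: "matrix_poly (\<lambda>M. M$i$j)"
| add: "matrix_poly f \<Longrightarrow> matrix_poly g \<Longrightarrow> matrix_poly (\<lambda>M. f M + g M)"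
| mult: "matrix_poly f \<Longrightarrow> matrix_poly g \<Longrightarrow> matrix_poly (\<lambda>M. f M * g M)"

definition zariski_dense_SL3 :: "(real^3^3) set \<Rightarrow> bool" where
  "zariski_dense_SL3 S \<longleftrightarrow> S \<subseteq> SL3 \<and>
     (\<forall>f. matrix_poly f \<longrightarrow> (\<forall>M\<in>S. f M = 0) \<longrightarrow> (\<forall>M\<in>SL3. f M = 0))"

end

theory Submission
  imports Defs
begin

(* If p_{B1,B2} vanished mu-almost everywhere, the lift (x, 1) of mu-almost every x would lie in
   the zero set Z of the quadratic form Q v = <r_{B1,1},v> <r_{B2,2},v> - <r_{B2,1},v> <r_{B1,2},v>,
   a closed cone. Since the A_i have positive entries, (phi_{A_i} x, 1) is a positive multiple of
   A_i (x, 1), so stationarity propagates this to: M (x, 1) \<in> Z for mu-almost every x, for every M in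
   the semigroup. These are closed conditions, so by second countability a single x satisfies all of
   them. Zariski density gives Q (M (x, 1)) = 0 for all M in SL(3,R), which acts transitively on
   nonzero vectors; hence Q = 0, and independence of the rows of B1 forces B2 \<in> B1 R. *)

definition pB_hom :: "real^'n^2 \<Rightarrow> real^'n^2 \<Rightarrow> real^'n \<Rightarrow> real" where
  "pB_hom B1 B2 v = (B1$1 \<bullet> v) * (B2$2 \<bullet> v) - (B2$1 \<bullet> v) * (B1$2 \<bullet> v)"

lemma pB_eq_pB_hom_tl3: "pB B1 B2 x = pB_hom B1 B2 (tl3 x)"
  by (simp add: pB_def pB_hom_def)

lemma continuous_on_tl3: "continuous_on S tl3"
proof -
  have tl3_eq: "tl3 = (\<lambda>x. \<chi> i. if i = 1 then x$1 else if i = 2 then x$2 else 1)"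
    by (simp add: tl3_def fun_eq_iff vec_eq_iff forall_3)
  show ?thesis unfolding tl3_eq
  proof (intro continuous_on_vec_lambda)
    fix i :: 3
    show "continuous_on S (\<lambda>x. if i = 1 then x$1 else if i = 2 then x$2 else 1)"
      by (cases "i = 1"; cases "i = 2") (auto intro: continuous_on_component)
  qed
qed

lemma continuous_on_pB_hom: "continuous_on S (pB_hom B1 B2)"
  unfolding pB_hom_def by (intro continuous_intros)

lemma continuous_on_pB: "continuous_on S (pB B1 B2)"
  unfolding pB_eq_pB_hom_tl3[abs_def]
  by (rule continuous_on_compose2[OF continuous_on_pB_hom continuous_on_tl3 subset_UNIV])

lemma closed_pB_hom_zero_set: "closed (pB_hom B1 B2 -` {0})"
  by (intro closed_vimage continuous_on_pB_hom) simp

lemma cone_pB_hom_zero_set: "cone (pB_hom B1 B2 -` {0})"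
  by (simp add: cone_def pB_hom_def algebra_simps)

lemma matrix_poly_sum:
  "finite S \<Longrightarrow> (\<And>k. k \<in> S \<Longrightarrow> matrix_poly (f k)) \<Longrightarrow> matrix_poly (\<lambda>M. \<Sum>k\<in>S. f k M)"
  by (induction S rule: finite_induct) (auto intro: matrix_poly.intros)

lemma matrix_poly_diff:
  "matrix_poly f \<Longrightarrow> matrix_poly g \<Longrightarrow> matrix_poly (\<lambda>M. f M - g M)"
  using matrix_poly.add[OF _ matrix_poly.mult[OF matrix_poly.const, of g "-1"]] by simp

lemma matrix_poly_inner_mult_vec: "matrix_poly (\<lambda>M. u \<bullet> (M *v t))"
  unfolding inner_vec_def matrix_vector_mult_def
  by (auto intro!: matrix_poly_sum matrix_poly.intros)

lemma matrix_poly_pB_hom_mult_vec: "matrix_poly (\<lambda>M. pB_hom B1 B2 (M *v t))"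
  unfolding pB_hom_def by (intro matrix_poly_diff matrix_poly.mult matrix_poly_inner_mult_vec)

lemma exists_det_eq_1_completion:
  fixes w :: "real^3"
  assumes "w \<noteq> 0"
  obtains u v where "det (vector [u, v, w] :: real^3^3) = 1"
proof -
  obtain k where "w $ k \<noteq> 0" using assms by (metis vec_eq_iff zero_index)
  then consider "w$1 \<noteq> 0" | "w$2 \<noteq> 0" | "w$3 \<noteq> 0" by (metis exhaust_3)
  then show ?thesis
  proof cases
    case 1
    then show ?thesis by (intro that[of "vector [0, 1 / w$1, 0]" "vector [0, 0, 1]"]) (simp add: det_3)
  next
    case 2
    then show ?thesis by (intro that[of "vector [0, 0, 1 / w$2]" "vector [1, 0, 0]"]) (simp add: det_3)
  next
    case 3
    then show ?thesis by (intro that[of "vector [1 / w$3, 0, 0]" "vector [0, 1, 0]"]) (simp add: det_3)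
  qed
qed

lemma SL3_orbit_tl3:
  fixes w :: "real^3"
  assumes "w \<noteq> 0"
  shows "\<exists>M\<in>SL3. M *v tl3 x = w"
proof -
  obtain u v where uv: "det (vector [u, v, w] :: real^3^3) = 1"
    using exists_det_eq_1_completion[OF assms] by blast
  define M :: "real^3^3" where "M = transpose (vector [u, v, w - x$1 *\<^sub>R u - x$2 *\<^sub>R v])"
  have "det M = 1"
    using uv unfolding M_def det_transpose by (simp add: det_3 algebra_simps)
  moreover have "M *v tl3 x = w"
    by (simp add: M_def tl3_def vec_eq_iff forall_3 matrix_vector_mult_def transpose_def sum_3 algebra_simps)
  ultimately show ?thesis by (auto simp: SL3_def)
qed

lemma pB_hom_eq_0_if_vanishes_on_SL3_orbit:
  assumes "\<forall>M\<in>SL3. pB_hom B1 B2 (M *v tl3 x) = 0"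
  shows "pB_hom B1 B2 w = 0"
proof (cases "w = 0")
  case False
  then show ?thesis using SL3_orbit_tl3 assms by metis
qed (simp add: pB_hom_def)

lemma polarize_products_agree:
  fixes a b r q :: "'a::real_inner"
  assumes prod: "\<And>v. (a \<bullet> v) * (q \<bullet> v) = (r \<bullet> v) * (b \<bullet> v)"
  shows "(a \<bullet> v) * (q \<bullet> w) + (a \<bullet> w) * (q \<bullet> v) = (r \<bullet> v) * (b \<bullet> w) + (r \<bullet> w) * (b \<bullet> v)"
  using prod[of "v + w"] prod[of v] prod[of w] by (simp add: inner_add_right algebra_simps)

lemma independent_imp_nonzero_minor:
  fixes a b :: "real^'n"
  assumes ind: "independent {a, b}" and "a \<noteq> b"
  obtains i j where "a$i * b$j - a$j * b$i \<noteq> 0"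
proof (rule ccontr)
  assume "\<not> thesis"
  with that have minors: "a$i * b$j = a$j * b$i" for i j by fastforce
  have "b \<noteq> 0" using ind by (metis dependent_zero insertI1 insert_commute)
  then obtain k where k: "b$k \<noteq> 0" by (metis vec_eq_iff zero_index)
  have "a = (a$k / b$k) *\<^sub>R b"
    using k minors[of _ k] by (simp add: vec_eq_iff field_simps)
  then have "a \<in> span {b}" by (metis span_base span_scale singletonI)
  with ind \<open>a \<noteq> b\<close> show False by (simp add: independent_insert)
qed

lemma proportional_if_products_agree:
  fixes a b r q :: "real^'n"
  assumes prod: "\<And>v. (a \<bullet> v) * (q \<bullet> v) = (r \<bullet> v) * (b \<bullet> v)"
    and "independent {a, b}" "a \<noteq> b"
  shows "\<exists>c. r = c *\<^sub>R a \<and> q = c *\<^sub>R b"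
proof -
  obtain i j where m: "a$i * b$j - a$j * b$i \<noteq> 0"
    using independent_imp_nonzero_minor assms(2,3) by blast
  have E: "a$s * q$t + a$t * q$s = r$s * b$t + r$t * b$s" for s t
    using polarize_products_agree[OF prod, of "axis s 1" "axis t 1"] by (simp add: inner_axis)
  define c where "c = (r$i * b$j - r$j * b$i) / (a$i * b$j - a$j * b$i)"
  have "r$k * (a$i * b$j - a$j * b$i) = (r$i * b$j - r$j * b$i) * a$k" for k
    using m E[of i i] E[of j j] E[of k k] E[of i j] E[of i k] E[of j k] by algebra
  moreover have "q$k * (a$i * b$j - a$j * b$i) = (r$i * b$j - r$j * b$i) * b$k" for k
    using m E[of i i] E[of j j] E[of k k] E[of i j] E[of i k] E[of j k] by algebra
  ultimately have "r = c *\<^sub>R a \<and> q = c *\<^sub>R b"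
    using m by (simp add: c_def vec_eq_iff field_simps)
  then show ?thesis by blast
qed

lemma pB_hom_eq_0_imp_proportional:
  assumes "\<And>v. pB_hom B1 B2 v = 0" and "independent {B1$1, B1$2}" "B1$1 \<noteq> B1$2"
  shows "\<exists>c. B2 = c *\<^sub>R B1"
proof -
  have "\<And>v. (B1$1 \<bullet> v) * (B2$2 \<bullet> v) = (B2$1 \<bullet> v) * (B1$2 \<bullet> v)"
    using assms(1) by (simp add: pB_hom_def)
  then obtain c where "B2$1 = c *\<^sub>R B1$1" "B2$2 = c *\<^sub>R B1$2"
    using proportional_if_products_agree assms(2,3) by blast
  then have "B2 = c *\<^sub>R B1" by (simp add: vec_eq_iff forall_2)
  then show ?thesis by blast
qed

lemma weighted_mean_eq_1_imp_eq_1: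
  fixes p f :: "'i \<Rightarrow> real"
  assumes "finite I" and p_pos: "\<And>i. i \<in> I \<Longrightarrow> p i > 0" and "sum p I = 1"
    and f_le: "\<And>i. i \<in> I \<Longrightarrow> f i \<le> 1" and "(\<Sum>i\<in>I. p i * f i) = 1" and "i \<in> I"
  shows "f i = 1"
proof -
  have "(\<Sum>i\<in>I. p i * (1 - f i)) = sum p I - (\<Sum>i\<in>I. p i * f i)"
    by (simp add: right_diff_distrib sum_subtractf)
  also have "\<dots> = 0" using assms(3,5) by simp
  finally have sum_0: "(\<Sum>i\<in>I. p i * (1 - f i)) = 0" .
  have nonneg: "p j * (1 - f j) \<ge> 0" if "j \<in> I" for j
    using p_pos[OF that] f_le[OF that] by simp
  have "\<forall>j\<in>I. p j * (1 - f j) = 0"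
    using sum_nonneg_eq_0_iff[OF \<open>finite I\<close> nonneg] sum_0 by simp
  then have "p i * (1 - f i) = 0" using \<open>i \<in> I\<close> by blast
  then show ?thesis using p_pos[OF \<open>i \<in> I\<close>] by simp
qed

lemma AE_Ball_closed:
  fixes M :: "'a::second_countable_topology measure"
  assumes "\<And>C. C \<in> F \<Longrightarrow> closed C" and "\<And>C. C \<in> F \<Longrightarrow> AE x in M. x \<in> C"
  shows "AE x in M. \<forall>C\<in>F. x \<in> C"
proof -
  obtain G where G: "G \<subseteq> uminus ` F" "countable G" "\<Union>G = \<Union>(uminus ` F)"
    using Lindelof[of "uminus ` F"] assms(1) by (metis imageE open_Compl)
  have "AE x in M. \<forall>U\<in>G. x \<notin> U"
    using G(1,2) assms(2) by (auto intro!: AE_ball_countable')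
  then show ?thesis
    by eventually_elim (use G(3) in blast)
qed

lemma inner_tl3_pos:
  assumes "\<And>k. r$k > 0" and "x$1 \<ge> 0" "x$2 \<ge> 0"
  shows "r \<bullet> tl3 x > 0"
proof -
  have "r$1 * x$1 \<ge> 0" "r$2 * x$2 \<ge> 0" using assms by (simp_all add: less_imp_le)
  moreover have "r \<bullet> tl3 x = r$1 * x$1 + r$2 * x$2 + r$3" by (simp add: tl3_def inner_vec_def sum_3)
  ultimately show ?thesis using assms(1)[of 3] by linarith
qed

lemma mult_tl3_eq_scaleR_tl3_phiA:
  assumes "M$3 \<bullet> tl3 x \<noteq> 0"
  shows "M *v tl3 x = (M$3 \<bullet> tl3 x) *\<^sub>R tl3 (phiA M x)"
  using assms
  by (simp add: vec_eq_iff forall_3 matrix_vector_mul_component phiA_def del: vector_3)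
    (simp add: tl3_def)

locale positive_stationary_measure = prob_space \<mu>
  for \<mu> :: "(real^2) measure" +
  fixes I :: "'i set" and A :: "'i \<Rightarrow> real^3^3" and p :: "'i \<Rightarrow> real"
  assumes finite_I: "finite I"
    and A_pos: "\<And>i j k. i \<in> I \<Longrightarrow> A i $ j $ k > 0"
    and p_pos: "\<And>i. i \<in> I \<Longrightarrow> p i > 0" and sum_p: "(\<Sum>i\<in>I. p i) = 1"
    and sets_\<mu>: "sets \<mu> = sets borel"
    and AE_pos: "AE x in \<mu>. \<forall>k. x$k > 0"
    and stationary: "\<And>S. S \<in> sets borel \<Longrightarrow>
           prob S = (\<Sum>i\<in>I. p i * prob (phiA (A i) -` S \<inter> space \<mu>))"
begin

lemma space_\<mu>: "space \<mu> = UNIV"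
  using sets_eq_imp_space_eq[OF sets_\<mu>] by simp

lemma prob_phiA_vimage_eq_1:
  assumes "S \<in> sets borel" "prob S = 1" "i \<in> I"
  shows "prob (phiA (A i) -` S) = 1"
proof (rule weighted_mean_eq_1_imp_eq_1[OF finite_I p_pos sum_p _ _ \<open>i \<in> I\<close>])
  show "(\<Sum>i\<in>I. p i * prob (phiA (A i) -` S)) = 1"
    using stationary[OF assms(1)] assms(2) by (simp add: space_\<mu>)
qed (simp_all add: prob_le_1)

lemma AE_generator_mult_tl3_in_cone:
  assumes "i \<in> I" "closed R" "cone R" "AE x in \<mu>. tl3 x \<in> R"
  shows "AE x in \<mu>. A i *v tl3 x \<in> R"
proof -
  have "closed (tl3 -` R)"
    using closed_vimage[OF \<open>closed R\<close> continuous_on_tl3] by simp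
  then have "prob (tl3 -` R) = 1"
    using assms(4) by (subst prob_eq_1) (auto simp: sets_\<mu>)
  then have phiA_full: "prob (phiA (A i) -` tl3 -` R) = 1"
    using prob_phiA_vimage_eq_1 \<open>closed (tl3 -` R)\<close> \<open>i \<in> I\<close> by auto
  \<comment> \<open>measure 1 forces measurability, so no regularity of phiA is needed\<close>
  then have "phiA (A i) -` tl3 -` R \<in> sets \<mu>"
    using measure_notin_sets by fastforce
  with phiA_full have "AE x in \<mu>. tl3 (phiA (A i) x) \<in> R"
    by (subst (asm) prob_eq_1) auto
  then show ?thesis
    using AE_pos
  proof eventually_elim
    case (elim x)
    have "A i $ 3 \<bullet> tl3 x > 0"
      using elim(2) A_pos[OF \<open>i \<in> I\<close>] by (intro inner_tl3_pos) (auto simp: less_imp_le)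
    then show ?case
      using elim(1) \<open>cone R\<close> mult_tl3_eq_scaleR_tl3_phiA[of "A i" x] by (simp add: cone_def)
  qed
qed

lemma AE_semigroup_mult_tl3_in_cone:
  assumes "M \<in> semigroup_gen (A ` I)" "closed R" "cone R" "AE x in \<mu>. tl3 x \<in> R"
  shows "AE x in \<mu>. M *v tl3 x \<in> R"
  using assms
proof (induction arbitrary: R)
  case (gen M)
  then show ?case using AE_generator_mult_tl3_in_cone by blast
next
  case (mult M N)
  let ?R' = "(*v) M -` R"
  have "closed ?R'"
    using mult.prems(1) by (intro closed_vimage matrix_vector_mult_linear_continuous_on)
  moreover have "cone ?R'"
    using mult.prems(2) by (simp add: cone_def matrix_vector_mult_scaleR)
  moreover have "AE x in \<mu>. tl3 x \<in> ?R'"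
    using mult.IH(1) mult.prems by simp
  ultimately have "AE x in \<mu>. N *v tl3 x \<in> ?R'"
    by (rule mult.IH(2))
  then show ?case by (simp add: matrix_vector_mul_assoc)
qed

lemma exists_semigroup_orbit_in_cone:
  assumes "closed R" "cone R" "AE x in \<mu>. tl3 x \<in> R"
  obtains x where "\<forall>M\<in>semigroup_gen (A ` I). M *v tl3 x \<in> R"
proof -
  let ?F = "(\<lambda>M. (\<lambda>x. M *v tl3 x) -` R) ` semigroup_gen (A ` I)"
  have "AE x in \<mu>. \<forall>C\<in>?F. x \<in> C"
  proof (rule AE_Ball_closed)
    show "closed C" if "C \<in> ?F" for C
      using that \<open>closed R\<close>
      by (auto intro!: closed_vimage continuous_on_compose2[OF matrix_vector_mult_linear_continuous_on continuous_on_tl3])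
    show "AE x in \<mu>. x \<in> C" if "C \<in> ?F" for C
      using that AE_semigroup_mult_tl3_in_cone[OF _ assms] by auto
  qed
  then have "\<exists>x. \<forall>C\<in>?F. x \<in> C"
    using AE_False eventually_mono by blast
  then show ?thesis using that by auto
qed

end

theorem lemma4p10:
  fixes I :: "'i set" and A :: "'i \<Rightarrow> real^3^3" and p :: "'i \<Rightarrow> real"
    and \<mu> :: "(real^2) measure" and B1 B2 :: "real^3^2"
  assumes finI: "finite I"
    and A_pos: "A ` I \<subseteq> SL3pos"
    and zd: "zariski_dense_SL3 (semigroup_gen (A ` I))"
    and p_pos: "\<forall>i\<in>I. p i > 0" and p_sum: "(\<Sum>i\<in>I. p i) = 1"
    and mu_prob: "prob_space \<mu>" and mu_sets: "sets \<mu> = sets borel"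
    and mu_supp: "\<exists>K. compact K \<and> K \<subseteq> {x. \<forall>k. x$k > 0} \<and> measure \<mu> K = 1"
    and mu_stat: "\<forall>S\<in>sets borel. measure \<mu> S =
                    (\<Sum>i\<in>I. p i * measure \<mu> (phiA (A i) -` S \<inter> space \<mu>))"
    and B1_in: "B1 \<in> Bset"
    and B2_notin: "\<not> (\<exists>c::real. B2 = c *\<^sub>R B1)"
  shows "measure \<mu> {x. pB B1 B2 x \<noteq> 0} > 0"
proof (rule ccontr)
  assume "\<not> ?thesis"
  interpret prob_space \<mu> by (rule mu_prob)
  have "AE x in \<mu>. \<forall>k. x$k > 0"
  proof -
    obtain K where K: "compact K" "K \<subseteq> {x. \<forall>k. x$k > 0}" "prob K = 1"
      using mu_supp by blast
    then have "AE x in \<mu>. x \<in> K"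
      by (subst (asm) prob_eq_1) (auto simp: mu_sets compact_imp_closed)
    then show ?thesis using K(2) by (auto elim: eventually_mono)
  qed
  then interpret positive_stationary_measure \<mu> I A p
    using finI A_pos p_pos p_sum mu_sets mu_stat by unfold_locales (auto simp: SL3pos_def)
  have "{x. pB B1 B2 x \<noteq> 0} \<in> sets \<mu>"
    using open_Collect_neq[OF continuous_on_pB continuous_on_const] by (simp add: sets_\<mu>)
  with \<open>\<not> ?thesis\<close> have "AE x in \<mu>. pB B1 B2 x = 0"
    by (simp add: prob_eq_0 not_less measure_le_0_iff)
  then have "AE x in \<mu>. tl3 x \<in> pB_hom B1 B2 -` {0}"
    by (simp add: pB_eq_pB_hom_tl3)
  then obtain x where "\<forall>M\<in>semigroup_gen (A ` I). pB_hom B1 B2 (M *v tl3 x) = 0"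
    using exists_semigroup_orbit_in_cone[OF closed_pB_hom_zero_set cone_pB_hom_zero_set] by auto
  then have "\<forall>M\<in>SL3. pB_hom B1 B2 (M *v tl3 x) = 0"
    using zd matrix_poly_pB_hom_mult_vec[of B1 B2 "tl3 x"] unfolding zariski_dense_SL3_def by blast
  then have "pB_hom B1 B2 w = 0" for w
    by (rule pB_hom_eq_0_if_vanishes_on_SL3_orbit)
  then show False
    using pB_hom_eq_0_imp_proportional B1_in B2_notin by (auto simp: Bset_def)
qed

end
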